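(* Let $\alpha\in\mathcal{P}(n)$ with $\delta(\alpha)=\big(1,2,\dots,q,q^{(s_q)},(q-1)^{(s_{q-1})},\dots,1^{(s_1)}\big)$, where $q\ge1$, $s_1,\dots,s_q\ge0$. Let $\overline{\alpha}=(\overline{\alpha}_1,\dots,\overline{\alpha}_q)$ with $\overline{\alpha}_i=q-i+1+\sum_{k=i}^q s_k$ and $\underline{\alpha}=\overline{\alpha}^*$. Then the multiset of (nonzero) entries of $\delta(\overline{\alpha})=\delta(\underline{\alpha})$ is equal to the multiset of parts of $\underline{\alpha}$.
   Context: A partition of a positive integer $n$ is a finite non-increasing sequence $\alpha=(\alpha_1,\dots,\alpha_l)$ of positive integers with sum $n$; $\mathcal{P}(n)$ is the set of partitions of $n$, and $\alpha_i=0$ for $i>l$. The diagonal sequence is $\delta(\alpha)=(d_k)_{k\ge1}$ with $d_k=|\{i:1\le i\le k,\ \alpha_i+i-1\ge k\}|$, trailing zeros omitted. $j^{(s)}$ denotes $s$ consecutive entries equal to $j$. The conjugate $\beta^*$ of a partition $\beta$ has parts $\beta^*_j=|\{i:\beta_i\ge j\}|$. *)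

theory Defs
  imports "HOL-Library.Multiset"
begin

definition is_partition :: "nat \<Rightarrow> nat list \<Rightarrow> bool" where
  "is_partition n a \<longleftrightarrow> sorted_wrt (\<ge>) a \<and> (\<forall>x\<in>set a. 0 < x) \<and> sum_list a = n"

text \<open>1-indexed part, with a_i = 0 for i > length.\<close>
definition part :: "nat list \<Rightarrow> nat \<Rightarrow> nat" where
  "part a i = (if 1 \<le> i \<and> i \<le> length a then a ! (i - 1) else 0)"

definition diag :: "nat list \<Rightarrow> nat \<Rightarrow> nat" where
  "diag a k = card {i. 1 \<le> i \<and> i \<le> k \<and> part a i + i - 1 \<ge> k}"

text \<open>Diagonal sequence (d_1, d_2, ...) with trailing zeros omitted; d_k = 0 for
  k > sum a + length a, so the bound is harmless.\<close>
definition delta :: "nat list \<Rightarrow> nat list" where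
  "delta a = rev (dropWhile (\<lambda>x. x = 0)
     (rev (map (diag a) [1..<sum_list a + length a + 1])))"

definition conjugate :: "nat list \<Rightarrow> nat list" where
  "conjugate b = map (\<lambda>j. card {i. 1 \<le> i \<and> i \<le> length b \<and> part b i \<ge> j}) [1..<part b 1 + 1]"

end

theory Submission
  imports Defs
begin

text \<open>The entry \<open>d\<^sub>k\<close> of \<open>\<delta>(\<beta>)\<close> counts the cells \<open>(i, k + 1 - i)\<close> of the Young diagram
  of \<open>\<beta>\<close> on its \<open>k\<close>-th antidiagonal, so \<open>\<delta>\<close> is invariant under conjugation, which transposes
  the diagram. If the parts of \<open>\<beta>\<close> are distinct, \<open>\<beta>\<^sub>i + i\<close> is non-increasing, so the rows
  meeting the \<open>k\<close>-th antidiagonal form an initial segment; hence \<open>d\<^sub>k \<ge> v\<close> holds exactly for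
  \<open>v \<le> k < \<beta>\<^sub>v + v\<close>, i.e. for \<open>\<beta>\<^sub>v\<close> values of \<open>k\<close>. As \<open>\<beta>\<^sup>*\<close> also has exactly \<open>\<beta>\<^sub>v\<close>
  parts \<open>\<ge> v\<close>, the nonzero entries of \<open>\<delta>(\<beta>)\<close> and the parts of \<open>\<beta>\<^sup>*\<close> agree as multisets.
  The partition \<open>\<alpha>bar\<close> has distinct parts: consecutive parts differ by \<open>1 + s\<^sub>i\<close>.\<close>

lemma card_downclosed_ge_iff:
  assumes down: "\<And>i j. 1 \<le> i \<Longrightarrow> i \<le> j \<Longrightarrow> j \<le> q \<Longrightarrow> P j \<Longrightarrow> P i"
    and "1 \<le> r"
  shows "r \<le> card {i. 1 \<le> i \<and> i \<le> q \<and> P i} \<longleftrightarrow> r \<le> q \<and> P r"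
proof
  assume "r \<le> q \<and> P r"
  then have "{1..r} \<subseteq> {i. 1 \<le> i \<and> i \<le> q \<and> P i}"
    using down by auto
  then have "card {1..r} \<le> card {i. 1 \<le> i \<and> i \<le> q \<and> P i}"
    by (rule card_mono[rotated]) auto
  then show "r \<le> card {i. 1 \<le> i \<and> i \<le> q \<and> P i}" by simp
next
  assume r_le: "r \<le> card {i. 1 \<le> i \<and> i \<le> q \<and> P i}"
  show "r \<le> q \<and> P r"
  proof (rule ccontr)
    assume not_r: "\<not> (r \<le> q \<and> P r)"
    have "{i. 1 \<le> i \<and> i \<le> q \<and> P i} \<subseteq> {1..<r}"
    proof
      fix i assume "i \<in> {i. 1 \<le> i \<and> i \<le> q \<and> P i}"
      then show "i \<in> {1..<r}" using down[of r i] not_r \<open>1 \<le> r\<close> by (auto simp: not_le[symmetric])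
    qed
    then have "card {i. 1 \<le> i \<and> i \<le> q \<and> P i} \<le> card {1..<r}"
      by (rule card_mono[rotated]) simp
    then show False using r_le \<open>1 \<le> r\<close> by simp
  qed
qed

lemma length_filter_map_upt:
  "length (filter P (map f [1..<m + 1])) = card {k. 1 \<le> k \<and> k \<le> m \<and> P (f k)}"
proof -
  have "length (filter P (map f [1..<m + 1])) = length (filter (P \<circ> f) [1..<m + 1])"
    by (simp add: filter_map)
  also have "\<dots> = card (set (filter (P \<circ> f) [1..<m + 1]))"
    by (rule distinct_card[symmetric]) simp
  also have "set (filter (P \<circ> f) [1..<m + 1]) = {k. 1 \<le> k \<and> k \<le> m \<and> P (f k)}"
    by auto
  finally show ?thesis .
qed

lemma mset_eq_by_thresholds:
  fixes xs ys :: "nat list"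
  assumes "0 \<notin> set xs" "0 \<notin> set ys"
    and "\<And>v. 1 \<le> v \<Longrightarrow> length (filter (\<lambda>x. v \<le> x) xs) = length (filter (\<lambda>x. v \<le> x) ys)"
  shows "mset xs = mset ys"
proof (rule multiset_eqI)
  fix v
  have split: "length (filter (\<lambda>x. v \<le> x) zs) = count (mset zs) v + length (filter (\<lambda>x. Suc v \<le> x) zs)"
    for zs :: "nat list"
    by (induction zs) auto
  show "count (mset xs) v = count (mset ys) v"
  proof (cases "v = 0")
    case True
    then show ?thesis using assms(1,2) by (metis count_mset_0_iff)
  next
    case False
    then show ?thesis
      using split[of xs] split[of ys] assms(3)[of v] assms(3)[of "Suc v"] by simp
  qed
qed

lemma part_le_sum_list: "part a i \<le> sum_list a"
  unfolding part_def by (auto intro: member_le_sum_list)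

lemma part_pos_imp_index: "0 < part a i \<Longrightarrow> 1 \<le> i \<and> i \<le> length a"
  unfolding part_def by (auto split: if_splits)

lemma map_part_upt: "map (part a) [1..<length a + 1] = a"
  by (rule nth_equalityI) (auto simp del: upt_Suc simp: part_def)

lemma part_antimono:
  assumes "sorted_wrt (\<ge>) a" "1 \<le> i" "i \<le> j"
  shows "part a j \<le> part a i"
  using assms sorted_wrt_nth_less[OF assms(1), of "i - 1" "j - 1"]
  by (cases "i = j") (auto simp: part_def)

lemma part_add_index_antimono:
  assumes "sorted_wrt (>) a" "1 \<le> i" "i \<le> j" "j \<le> length a"
  shows "part a j + j \<le> part a i + i"
  using assms(3,4)
proof (induction j rule: dec_induct)
  case (step j)
  have "part a (Suc j) < part a j"
    using sorted_wrt_nth_less[OF assms(1), of "j - 1" j] assms(2) step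
    by (auto simp: part_def)
  then show ?case using step by simp
qed simp

lemma diag_eq_card_antidiagonal: "diag a k = card {i. 1 \<le> i \<and> i \<le> k \<and> k < part a i + i}"
  unfolding diag_def by (rule arg_cong[where f = card]) auto

lemma length_conjugate: "length (conjugate b) = part b 1"
  by (simp add: conjugate_def)

lemma part_conjugate_ge_iff:
  assumes sorted: "sorted_wrt (\<ge>) b" and "1 \<le> i" "1 \<le> j"
  shows "i \<le> part (conjugate b) j \<longleftrightarrow> j \<le> part b i"
proof (cases "j \<le> part b 1")
  case True
  then have "part (conjugate b) j = conjugate b ! (j - 1)"
    using \<open>1 \<le> j\<close> by (simp add: part_def length_conjugate)
  also have "\<dots> = card {i. 1 \<le> i \<and> i \<le> length b \<and> j \<le> part b i}"
    unfolding conjugate_def using True \<open>1 \<le> j\<close> by (subst nth_map_upt) auto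
  finally have "part (conjugate b) j = card {i. 1 \<le> i \<and> i \<le> length b \<and> j \<le> part b i}" .
  moreover have "i \<le> card {i. 1 \<le> i \<and> i \<le> length b \<and> j \<le> part b i}
      \<longleftrightarrow> i \<le> length b \<and> j \<le> part b i"
  proof (rule card_downclosed_ge_iff[OF _ \<open>1 \<le> i\<close>])
    fix i i' assume "1 \<le> i" "i \<le> i'" "i' \<le> length b" "j \<le> part b i'"
    then show "j \<le> part b i" using part_antimono[OF sorted, of i i'] by simp
  qed
  moreover have "j \<le> part b i \<Longrightarrow> i \<le> length b"
    using part_pos_imp_index[of b i] \<open>1 \<le> j\<close> by simp
  ultimately show ?thesis by auto
next
  case False
  then have "part (conjugate b) j = 0"
    by (simp add: part_def length_conjugate)
  moreover have "part b i < j"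
    using False part_antimono[OF sorted, of 1 i] \<open>1 \<le> i\<close> by simp
  ultimately show ?thesis using \<open>1 \<le> i\<close> by simp
qed

lemma diag_conjugate:
  assumes "sorted_wrt (\<ge>) b"
  shows "diag (conjugate b) k = diag b k"
proof -
  define A where "A = {j. 1 \<le> j \<and> j \<le> k \<and> k < part (conjugate b) j + j}"
  define B where "B = {i. 1 \<le> i \<and> i \<le> k \<and> k < part b i + i}"
  have reflect: "j \<in> A \<longleftrightarrow> i \<in> B" if "i + j = k + 1" "1 \<le> i" "1 \<le> j" for i j
    using part_conjugate_ge_iff[OF assms that(2,3)] that unfolding A_def B_def by auto
  have "A \<subseteq> {1..k}" "B \<subseteq> {1..k}"
    unfolding A_def B_def by auto
  have "bij_betw (\<lambda>j. k + 1 - j) A B"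
  proof (rule bij_betw_byWitness[where f' = "\<lambda>i. k + 1 - i"])
    show "(\<lambda>j. k + 1 - j) ` A \<subseteq> B"
    proof
      fix i assume "i \<in> (\<lambda>j. k + 1 - j) ` A"
      then obtain j where "j \<in> A" "i = k + 1 - j" by blast
      moreover have "1 \<le> j" "j \<le> k" using \<open>j \<in> A\<close> unfolding A_def by auto
      ultimately show "i \<in> B" using reflect[of i j] by simp
    qed
    show "(\<lambda>i. k + 1 - i) ` B \<subseteq> A"
    proof
      fix j assume "j \<in> (\<lambda>i. k + 1 - i) ` B"
      then obtain i where "i \<in> B" "j = k + 1 - i" by blast
      moreover have "1 \<le> i" "i \<le> k" using \<open>i \<in> B\<close> unfolding B_def by auto
      ultimately show "j \<in> A" using reflect[of i j] by simp
    qed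
    show "\<forall>j\<in>A. k + 1 - (k + 1 - j) = j"
      using \<open>A \<subseteq> {1..k}\<close> by auto
    show "\<forall>i\<in>B. k + 1 - (k + 1 - i) = i"
      using \<open>B \<subseteq> {1..k}\<close> by auto
  qed
  then show ?thesis
    unfolding diag_eq_card_antidiagonal A_def B_def by (rule bij_betw_same_card)
qed

lemma diag_eq_0:
  assumes "sum_list a + length a < k"
  shows "diag a k = 0"
proof -
  have "part a i + i \<le> sum_list a + length a" if "k < part a i + i" "i \<le> k" for i
    using that part_le_sum_list[of a i] part_pos_imp_index[of a i] by fastforce
  then show ?thesis
    unfolding diag_eq_card_antidiagonal using assms by fastforce
qed

lemma delta_eq_trim_diag:
  assumes "sum_list a + length a \<le> M"
  shows "delta a = rev (dropWhile (\<lambda>x. x = 0) (rev (map (diag a) [1..<M + 1])))"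
proof -
  define N where "N = sum_list a + length a"
  have split: "[1..<M + 1] = [1..<N + 1] @ [N + 1..<M + 1]"
    using assms upt_add_eq_append[of 1 "N + 1" "M - N"] unfolding N_def by simp
  have "\<forall>x \<in> set (map (diag a) [N + 1..<M + 1]). x = 0"
    using diag_eq_0[of a] unfolding N_def by auto
  then show ?thesis
    unfolding delta_def N_def[symmetric] split rev_append map_append
    by (subst dropWhile_append2) auto
qed

lemma delta_cong_diag:
  assumes "diag a = diag b"
  shows "delta a = delta b"
  using delta_eq_trim_diag[of a "max (sum_list a + length a) (sum_list b + length b)"]
    delta_eq_trim_diag[of b "max (sum_list a + length a) (sum_list b + length b)"] assms
  by simp

lemma delta_conjugate: "sorted_wrt (\<ge>) b \<Longrightarrow> delta (conjugate b) = delta b"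
  by (rule delta_cong_diag) (auto simp: diag_conjugate)

lemma filter_nonzero_delta:
  "filter (\<lambda>x. x \<noteq> 0) (delta a) = filter (\<lambda>x. x \<noteq> 0) (map (diag a) [1..<sum_list a + length a + 1])"
proof -
  have "filter (\<lambda>x. x \<noteq> 0) (dropWhile (\<lambda>x. x = 0) xs) = filter (\<lambda>x. x \<noteq> 0) xs" for xs :: "nat list"
    by (induction xs) auto
  then show ?thesis
    unfolding delta_def by (simp add: rev_filter[symmetric])
qed

lemma length_filter_ge_conjugate:
  assumes sorted: "sorted_wrt (\<ge>) b" and "1 \<le> v"
  shows "length (filter (\<lambda>x. v \<le> x) (conjugate b)) = part b v"
proof -
  have "conjugate b = map (part (conjugate b)) [1..<part b 1 + 1]"
    using map_part_upt[of "conjugate b"] by (simp add: length_conjugate)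
  then have "length (filter (\<lambda>x. v \<le> x) (conjugate b))
      = card {j. 1 \<le> j \<and> j \<le> part b 1 \<and> v \<le> part (conjugate b) j}"
    using length_filter_map_upt by metis
  also have "{j. 1 \<le> j \<and> j \<le> part b 1 \<and> v \<le> part (conjugate b) j} = {1..part b v}"
    using part_conjugate_ge_iff[OF sorted \<open>1 \<le> v\<close>] part_antimono[OF sorted, of 1 v] \<open>1 \<le> v\<close>
    by auto
  finally show ?thesis by simp
qed

lemma diag_ge_iff_strict:
  assumes strict: "sorted_wrt (>) b" and "1 \<le> v"
  shows "v \<le> diag b k \<longleftrightarrow> v \<le> k \<and> k < part b v + v"
  unfolding diag_eq_card_antidiagonal
proof (rule card_downclosed_ge_iff[OF _ \<open>1 \<le> v\<close>])
  fix i j assume "1 \<le> i" "i \<le> j" "j \<le> k" "k < part b j + j"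
  then show "k < part b i + i"
    using part_add_index_antimono[OF strict, of i j] part_pos_imp_index[of b j] by fastforce
qed

lemma card_diag_ge_strict:
  assumes strict: "sorted_wrt (>) b" and "1 \<le> v"
  shows "card {k. 1 \<le> k \<and> k \<le> sum_list b + length b \<and> v \<le> diag b k} = part b v"
proof -
  have "part b v + v \<le> sum_list b + length b + 1" if "part b v \<noteq> 0"
    using that part_le_sum_list[of b v] part_pos_imp_index[of b v] by simp
  then have "1 \<le> k \<and> k \<le> sum_list b + length b \<and> v \<le> diag b k \<longleftrightarrow> k \<in> {v..<part b v + v}"
    for k
    unfolding diag_ge_iff_strict[OF assms, of k] using \<open>1 \<le> v\<close> by (cases "part b v = 0") auto
  then have "{k. 1 \<le> k \<and> k \<le> sum_list b + length b \<and> v \<le> diag b k} = {v..<part b v + v}"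
    by blast
  then show ?thesis by simp
qed

lemma zero_notin_conjugate:
  assumes sorted: "sorted_wrt (\<ge>) b"
  shows "0 \<notin> set (conjugate b)"
proof
  assume "0 \<in> set (conjugate b)"
  also have "set (conjugate b) = part (conjugate b) ` {1..<length (conjugate b) + 1}"
    by (subst map_part_upt[symmetric]) (simp only: set_map set_upt)
  finally obtain j where "1 \<le> j" "j \<le> length (conjugate b)" "part (conjugate b) j = 0"
    by auto
  then show False
    using part_conjugate_ge_iff[OF sorted, of 1 j] by (simp add: length_conjugate)
qed

theorem mset_nonzero_delta_eq_conjugate:
  assumes strict: "sorted_wrt (>) b"
  shows "mset (filter (\<lambda>x. x \<noteq> 0) (delta b)) = mset (conjugate b)"
  unfolding filter_nonzero_delta
proof (rule mset_eq_by_thresholds)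
  have sorted: "sorted_wrt (\<ge>) b"
    using strict by (rule sorted_wrt_mono_rel[rotated]) simp
  then show "0 \<notin> set (conjugate b)"
    by (rule zero_notin_conjugate)
  fix v :: nat assume "1 \<le> v"
  have "filter (\<lambda>x. v \<le> x) (filter (\<lambda>x. x \<noteq> 0) ds) = filter (\<lambda>x. v \<le> x) ds" for ds
    using \<open>1 \<le> v\<close> by (induction ds) auto
  then have "length (filter (\<lambda>x. v \<le> x)
      (filter (\<lambda>x. x \<noteq> 0) (map (diag b) [1..<sum_list b + length b + 1])))
    = card {k. 1 \<le> k \<and> k \<le> sum_list b + length b \<and> v \<le> diag b k}"
    by (simp only: length_filter_map_upt)
  also have "\<dots> = length (filter (\<lambda>x. v \<le> x) (conjugate b))"
    unfolding card_diag_ge_strict[OF strict \<open>1 \<le> v\<close>] length_filter_ge_conjugate[OF sorted \<open>1 \<le> v\<close>] ..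
  finally show "length (filter (\<lambda>x. v \<le> x)
      (filter (\<lambda>x. x \<noteq> 0) (map (diag b) [1..<sum_list b + length b + 1])))
    = length (filter (\<lambda>x. v \<le> x) (conjugate b))" .
qed simp

theorem corollary2p6:
  fixes n q :: nat and s :: "nat \<Rightarrow> nat" and \<alpha> :: "nat list"
  assumes "is_partition n \<alpha>"
    and "q \<ge> 1"
    and "delta \<alpha> = [1..<q+1] @ concat (map (\<lambda>j. replicate (s j) j) (rev [1..<q+1]))"
  defines "\<alpha>bar \<equiv> map (\<lambda>i. q - i + 1 + (\<Sum>k=i..q. s k)) [1..<q+1]"
  defines "\<alpha>under \<equiv> conjugate \<alpha>bar"
  shows "delta \<alpha>bar = delta \<alpha>under
    \<and> mset (filter (\<lambda>x. x \<noteq> 0) (delta \<alpha>bar)) = mset \<alpha>under"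
proof -
  have "q - i + 1 + (\<Sum>k=i..q. s k) > q - j + 1 + (\<Sum>k=j..q. s k)"
    if "i < j" "j \<le> q" for i j
    using that sum_mono2[of "{i..q}" "{j..q}" s] by auto
  then have strict: "sorted_wrt (>) \<alpha>bar"
    unfolding \<alpha>bar_def sorted_wrt_map
    by (intro sorted_wrt_mono_rel[OF _ sorted_wrt_upt]) (auto simp del: upt_Suc)
  then have "sorted_wrt (\<ge>) \<alpha>bar"
    by (rule sorted_wrt_mono_rel[rotated]) simp
  then show ?thesis
    unfolding \<alpha>under_def
    using delta_conjugate mset_nonzero_delta_eq_conjugate[OF strict] by simp
qed

end
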